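(* Let $t\in\mathbb{R}$, $\mu>0$ and $\sigma>0$. Let $\mathcal{L}(\mu,\sigma)$ be the set of probability distributions $F$ on $\mathbb{R}$ with $\mathbb{E}^F[X]=\mu$ and $\mathbb{E}^F[X^2]=\mu^2+\sigma^2$ (for $X\sim F$), and $\mathcal{L}^+(\mu,\sigma)=\{F\in\mathcal{L}(\mu,\sigma): F(0-)=0\}$. Then \[ \sup_{F \in \mathcal{L}^+(\mu, \sigma)} \mathbb{E}^{F}[(X-t)^2_+] = \sup_{F \in \mathcal{L}(\mu, \sigma)} \mathbb{E}^{F}[(X-t)_{+}^2] = \sigma^2 + (\mu-t)_+^2. \]
   Context: For $x\in\mathbb{R}$, $(x)_+=\max\{x,0\}$. $F(0-)=\mathbb{P}(X<0)$ under $F$. $\mathbb{E}^F$ denotes expectation when $X$ has distribution $F$. *)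

theory Defs
  imports "HOL-Probability.Probability"
begin

definition moment_class :: "real \<Rightarrow> real \<Rightarrow> real measure set" where
  "moment_class \<mu> \<sigma> = {F. prob_space F \<and> sets F = sets borel \<and>
      integrable F (\<lambda>x. x) \<and> integrable F (\<lambda>x. x ^ 2) \<and>
      (\<integral>x. x \<partial>F) = \<mu> \<and> (\<integral>x. x ^ 2 \<partial>F) = \<mu> ^ 2 + \<sigma> ^ 2}"

definition moment_class_pos :: "real \<Rightarrow> real \<Rightarrow> real measure set" where
  "moment_class_pos \<mu> \<sigma> = {F \<in> moment_class \<mu> \<sigma>. measure F {..<0} = 0}"

end

theory Submission
  imports Defs
begin

text \<open>Put c = min t \<mu>. Pointwise (x - t)_+^2 \<le> (x - c)^2, and
  E (X - c)^2 = \<sigma>^2 + (\<mu> - c)^2 = \<sigma>^2 + (\<mu> - t)_+^2, which bounds both suprema.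
  Conversely, for s > 0 the law with mass 1/(1 + s^2) at \<mu> - \<sigma> s and mass
  s^2/(1 + s^2) at \<mu> + \<sigma>/s has mean \<mu> and variance \<sigma>^2; it lives on [0, \<infinity>) once
  \<sigma> s \<le> \<mu>, and its value of E (X - t)_+^2 tends to the bound as s \<rightarrow> 0+.
  The limit cannot be avoided: for t \<ge> \<mu> the supremum is not attained.\<close>

definition two_point_measure :: "real \<Rightarrow> real \<Rightarrow> real \<Rightarrow> real measure" where
  "two_point_measure p a b = distr (measure_pmf (bernoulli_pmf p)) borel (\<lambda>c. if c then b else a)"

lemma prob_space_two_point_measure: "prob_space (two_point_measure p a b)"
  unfolding two_point_measure_def
  by (rule prob_space.prob_space_distr) (auto simp: measure_pmf.prob_space_axioms)

lemma sets_two_point_measure [simp]: "sets (two_point_measure p a b) = sets borel"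
  unfolding two_point_measure_def by simp

lemma integrable_two_point_measure:
  fixes g :: "real \<Rightarrow> real"
  assumes "g \<in> borel_measurable borel"
  shows "integrable (two_point_measure p a b) g"
proof -
  have fin: "finite (set_pmf (bernoulli_pmf p))"
    by (rule finite_subset[of _ UNIV]) auto
  have "(\<lambda>c. if c then b else a) \<in> measure_pmf (bernoulli_pmf p) \<rightarrow>\<^sub>M borel"
    by simp
  from integrable_distr_eq[OF this assms] show ?thesis
    unfolding two_point_measure_def
    by (simp add: integrable_measure_pmf_finite[OF fin])
qed

lemma integral_two_point_measure:
  fixes g :: "real \<Rightarrow> real"
  assumes "0 \<le> p" "p \<le> 1" and "g \<in> borel_measurable borel"
  shows "(\<integral>x. g x \<partial>two_point_measure p a b) = p * g b + (1 - p) * g a"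
proof -
  have "(\<integral>x. g x \<partial>two_point_measure p a b)
      = (\<integral>c. g (if c then b else a) \<partial>measure_pmf (bernoulli_pmf p))"
    unfolding two_point_measure_def using assms(3) by (simp add: integral_distr)
  also have "\<dots> = (\<Sum>c\<in>UNIV. g (if c then b else a) * pmf (bernoulli_pmf p) c)"
    by (rule integral_measure_pmf_real) auto
  also have "\<dots> = p * g b + (1 - p) * g a"
    using assms by (simp add: UNIV_bool)
  finally show ?thesis .
qed

lemma measure_two_point_measure_eq_0:
  assumes "a \<notin> A" "b \<notin> A"
  shows "measure (two_point_measure p a b) A = 0"
proof (cases "A \<in> sets borel")
  case True
  have "(\<lambda>c. if c then b else a) -` A = {}"
    using assms by (auto split: if_splits)
  with True show ?thesis
    unfolding two_point_measure_def by (simp add: measure_distr)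
next
  case False
  then show ?thesis by (simp add: measure_notin_sets)
qed

lemma
  fixes F :: "real measure" and c :: real
  assumes "prob_space F" and "integrable F (\<lambda>x. x)" "integrable F (\<lambda>x. x ^ 2)"
  shows integrable_square_shift: "integrable F (\<lambda>x. (x - c) ^ 2)"
    and integral_square_shift:
      "(\<integral>x. (x - c) ^ 2 \<partial>F) = (\<integral>x. x ^ 2 \<partial>F) - 2 * c * (\<integral>x. x \<partial>F) + c ^ 2"
proof -
  have expand: "(\<lambda>x. (x - c) ^ 2) = (\<lambda>x. x ^ 2 - 2 * c * x + c ^ 2)"
    by (simp add: power2_diff algebra_simps)
  show "integrable F (\<lambda>x. (x - c) ^ 2)"
    unfolding expand using assms by (simp add: prob_space.finite_measure finite_measure.integrable_const)
  show "(\<integral>x. (x - c) ^ 2 \<partial>F) = (\<integral>x. x ^ 2 \<partial>F) - 2 * c * (\<integral>x. x \<partial>F) + c ^ 2"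
    unfolding expand using assms
    by (simp add: prob_space.finite_measure finite_measure.integrable_const prob_space.prob_space)
qed

lemma
  assumes "F \<in> moment_class \<mu> \<sigma>"
  shows integrable_square_shift_moment_class: "integrable F (\<lambda>x. (x - c) ^ 2)"
    and integral_square_shift_moment_class: "(\<integral>x. (x - c) ^ 2 \<partial>F) = \<sigma> ^ 2 + (\<mu> - c) ^ 2"
  using assms integrable_square_shift[of F] integral_square_shift[of F c]
  by (auto simp: moment_class_def power2_diff)

lemma pos_part_square_le_square_shift:
  fixes x t \<mu> :: real
  shows "(max (x - t) 0) ^ 2 \<le> (x - min t \<mu>) ^ 2"
proof -
  have "max (x - t) 0 \<le> \<bar>x - min t \<mu>\<bar>"
    by linarith
  then show ?thesis
    by (metis abs_ge_zero max.cobounded2 power2_abs power_mono)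
qed

lemma integral_pos_part_square_le_moment_class:
  assumes F: "F \<in> moment_class \<mu> \<sigma>"
  shows "(\<integral>x. (max (x - t) 0) ^ 2 \<partial>F) \<le> \<sigma> ^ 2 + (max (\<mu> - t) 0) ^ 2"
proof -
  have sets_F: "sets F = sets borel"
    using F by (simp add: moment_class_def)
  have integrable_pos_part: "integrable F (\<lambda>x. (max (x - t) 0) ^ 2)"
  proof (rule Bochner_Integration.integrable_bound)
    show "integrable F (\<lambda>x. (x - min t \<mu>) ^ 2)"
      by (rule integrable_square_shift_moment_class[OF F])
    show "(\<lambda>x. (max (x - t) 0) ^ 2) \<in> borel_measurable F"
      unfolding measurable_cong_sets[OF sets_F refl] by measurable
  qed (simp add: pos_part_square_le_square_shift)
  have "(\<integral>x. (max (x - t) 0) ^ 2 \<partial>F) \<le> (\<integral>x. (x - min t \<mu>) ^ 2 \<partial>F)"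
    by (rule integral_mono[OF integrable_pos_part integrable_square_shift_moment_class[OF F]
          pos_part_square_le_square_shift])
  also have "\<dots> = \<sigma> ^ 2 + (max (\<mu> - t) 0) ^ 2"
    unfolding integral_square_shift_moment_class[OF F] by (simp add: max_def min_def)
  finally show ?thesis .
qed

lemma one_add_power2_pos: "0 < 1 + x ^ 2" for x :: real
  by (simp add: add_pos_nonneg)

definition moment_two_point :: "real \<Rightarrow> real \<Rightarrow> real \<Rightarrow> real measure" where
  "moment_two_point \<mu> \<sigma> s =
     two_point_measure (s ^ 2 / (1 + s ^ 2)) (\<mu> - \<sigma> * s) (\<mu> + \<sigma> / s)"

lemma integral_moment_two_point:
  fixes g :: "real \<Rightarrow> real"
  assumes "g \<in> borel_measurable borel"
  shows "(\<integral>x. g x \<partial>moment_two_point \<mu> \<sigma> s)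
           = (s ^ 2 * g (\<mu> + \<sigma> / s) + g (\<mu> - \<sigma> * s)) / (1 + s ^ 2)"
proof -
  have "0 < 1 + s ^ 2"
    by (rule one_add_power2_pos)
  then have weights: "0 \<le> s ^ 2 / (1 + s ^ 2)" "s ^ 2 / (1 + s ^ 2) \<le> 1"
    and "1 - s ^ 2 / (1 + s ^ 2) = 1 / (1 + s ^ 2)"
    by (simp_all add: field_simps)
  then show ?thesis
    unfolding moment_two_point_def integral_two_point_measure[OF weights assms]
    by (simp add: add_divide_distrib)
qed

lemma moment_two_point_in_moment_class:
  assumes "s > 0"
  shows "moment_two_point \<mu> \<sigma> s \<in> moment_class \<mu> \<sigma>"
proof -
  have "s ^ 2 * (\<mu> + \<sigma> / s) + (\<mu> - \<sigma> * s) = (1 + s ^ 2) * \<mu>"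
    and "s ^ 2 * (\<mu> + \<sigma> / s) ^ 2 + (\<mu> - \<sigma> * s) ^ 2 = (1 + s ^ 2) * (\<mu> ^ 2 + \<sigma> ^ 2)"
    using assms by (simp_all add: field_simps power2_eq_square)
  with one_add_power2_pos[of s] show ?thesis
    unfolding moment_class_def
    by (simp add: integral_moment_two_point)
       (simp add: moment_two_point_def prob_space_two_point_measure integrable_two_point_measure)
qed

lemma moment_two_point_in_moment_class_pos:
  assumes "s > 0" "0 \<le> \<sigma>" "\<sigma> * s \<le> \<mu>"
  shows "moment_two_point \<mu> \<sigma> s \<in> moment_class_pos \<mu> \<sigma>"
proof -
  have "0 \<le> \<sigma> * s" "0 \<le> \<sigma> / s"
    using assms by simp_all
  with assms have "0 \<le> \<mu> - \<sigma> * s" "0 \<le> \<mu> + \<sigma> / s"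
    by linarith+
  then have "measure (moment_two_point \<mu> \<sigma> s) {..<0} = 0"
    unfolding moment_two_point_def by (simp add: measure_two_point_measure_eq_0)
  with moment_two_point_in_moment_class[OF \<open>s > 0\<close>] show ?thesis
    by (simp add: moment_class_pos_def)
qed

definition two_point_stop_loss :: "real \<Rightarrow> real \<Rightarrow> real \<Rightarrow> real \<Rightarrow> real" where
  "two_point_stop_loss t \<mu> \<sigma> s =
     ((max (s * (\<mu> - t) + \<sigma>) 0) ^ 2 + (max (\<mu> - \<sigma> * s - t) 0) ^ 2) / (1 + s ^ 2)"

lemma integral_pos_part_square_moment_two_point:
  assumes "s > 0"
  shows "(\<integral>x. (max (x - t) 0) ^ 2 \<partial>moment_two_point \<mu> \<sigma> s) = two_point_stop_loss t \<mu> \<sigma> s"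
proof -
  have "s * max (\<mu> + \<sigma> / s - t) 0 = max (s * (\<mu> - t) + \<sigma>) 0"
    using assms by (simp add: max_mult_distrib_left algebra_simps)
  then have "s ^ 2 * (max (\<mu> + \<sigma> / s - t) 0) ^ 2 = (max (s * (\<mu> - t) + \<sigma>) 0) ^ 2"
    by (metis power_mult_distrib)
  then show ?thesis
    unfolding two_point_stop_loss_def by (simp add: integral_moment_two_point)
qed

lemma two_point_stop_loss_tendsto:
  assumes "0 \<le> \<sigma>"
  shows "(two_point_stop_loss t \<mu> \<sigma> \<longlongrightarrow> \<sigma> ^ 2 + (max (\<mu> - t) 0) ^ 2) (at_right 0)"
proof -
  have "1 + s ^ 2 \<noteq> 0" for s :: real
    using one_add_power2_pos[of s] by linarith
  then have "continuous_on UNIV (two_point_stop_loss t \<mu> \<sigma>)"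
    unfolding two_point_stop_loss_def by (intro continuous_intros) simp
  then have "(two_point_stop_loss t \<mu> \<sigma> \<longlongrightarrow> two_point_stop_loss t \<mu> \<sigma> 0) (at 0)"
    by (simp add: continuous_on_def)
  then have "(two_point_stop_loss t \<mu> \<sigma> \<longlongrightarrow> two_point_stop_loss t \<mu> \<sigma> 0) (at_right 0)"
    by (rule tendsto_within_subset) simp
  moreover have "two_point_stop_loss t \<mu> \<sigma> 0 = \<sigma> ^ 2 + (max (\<mu> - t) 0) ^ 2"
    using assms by (simp add: two_point_stop_loss_def)
  ultimately show ?thesis
    by simp
qed

lemma SUP_moment_class_pos_ge:
  assumes "\<mu> > 0" "\<sigma> > 0"
  shows "ereal (\<sigma> ^ 2 + (max (\<mu> - t) 0) ^ 2)
           \<le> (SUP F\<in>moment_class_pos \<mu> \<sigma>. ereal (\<integral>x. (max (x - t) 0) ^ 2 \<partial>F))"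
proof (rule tendsto_upperbound)
  show "((\<lambda>s. ereal (two_point_stop_loss t \<mu> \<sigma> s))
          \<longlongrightarrow> ereal (\<sigma> ^ 2 + (max (\<mu> - t) 0) ^ 2)) (at_right 0)"
    using assms by (intro tendsto_ereal two_point_stop_loss_tendsto) simp
  have "\<forall>\<^sub>F s in at_right 0. s \<in> {0<..<\<mu> / \<sigma>}"
    using assms by (intro eventually_at_right_real) simp
  then show "\<forall>\<^sub>F s in at_right 0. ereal (two_point_stop_loss t \<mu> \<sigma> s)
               \<le> (SUP F\<in>moment_class_pos \<mu> \<sigma>. ereal (\<integral>x. (max (x - t) 0) ^ 2 \<partial>F))"
  proof eventually_elim
    case (elim s)
    then have "s > 0" "\<sigma> * s \<le> \<mu>"
      using assms by (simp_all add: pos_less_divide_eq mult.commute)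
    then have "moment_two_point \<mu> \<sigma> s \<in> moment_class_pos \<mu> \<sigma>"
      using assms by (intro moment_two_point_in_moment_class_pos) simp_all
    then have "ereal (\<integral>x. (max (x - t) 0) ^ 2 \<partial>moment_two_point \<mu> \<sigma> s)
        \<le> (SUP F\<in>moment_class_pos \<mu> \<sigma>. ereal (\<integral>x. (max (x - t) 0) ^ 2 \<partial>F))"
      by (rule SUP_upper)
    then show ?case
      by (simp add: integral_pos_part_square_moment_two_point[OF \<open>s > 0\<close>])
  qed
qed (rule trivial_limit_at_right_real)

theorem corollary2:
  fixes t \<mu> \<sigma> :: real
  assumes "\<mu> > 0" and "\<sigma> > 0"
  shows "(SUP F\<in>moment_class_pos \<mu> \<sigma>. ereal (\<integral>x. (max (x - t) 0) ^ 2 \<partial>F))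
           = (SUP F\<in>moment_class \<mu> \<sigma>. ereal (\<integral>x. (max (x - t) 0) ^ 2 \<partial>F))
       \<and> (SUP F\<in>moment_class \<mu> \<sigma>. ereal (\<integral>x. (max (x - t) 0) ^ 2 \<partial>F))
           = ereal (\<sigma> ^ 2 + (max (\<mu> - t) 0) ^ 2)"
proof -
  let ?value = "\<lambda>F. ereal (\<integral>x. (max (x - t) 0) ^ 2 \<partial>F)"
  let ?bound = "ereal (\<sigma> ^ 2 + (max (\<mu> - t) 0) ^ 2)"
  have pos_le: "(SUP F\<in>moment_class_pos \<mu> \<sigma>. ?value F) \<le> (SUP F\<in>moment_class \<mu> \<sigma>. ?value F)"
    by (rule SUP_subset_mono) (auto simp: moment_class_pos_def)
  have le_bound: "(SUP F\<in>moment_class \<mu> \<sigma>. ?value F) \<le> ?bound"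
    by (rule SUP_least) (simp add: integral_pos_part_square_le_moment_class)
  have bound_le: "?bound \<le> (SUP F\<in>moment_class_pos \<mu> \<sigma>. ?value F)"
    by (rule SUP_moment_class_pos_ge[OF assms])
  show ?thesis
    using antisym[OF pos_le order_trans[OF le_bound bound_le]]
      antisym[OF le_bound order_trans[OF bound_le pos_le]]
    by (rule conjI)
qed

end
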